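(* Let $n=2$. The map $\mathcal M:\Omega\to\mathbb R^5$, $W=(w_1,u_1,w_2,u_2,\sigma)\mapsto(M_0,\dots,M_4)^T$ with $M_j=\sum_{i=1}^2 w_i\Delta_j(u_i,\sigma)$, is injective on $\Omega=\{W\in\mathbb R^5: w_1>0,\ w_2>0,\ u_1<u_2,\ \sigma>0\}$ if and only if the kernel satisfies $\mathfrak m_4\ge 3+\frac98\mathfrak m_3^2$.
   Context: Let $\mathcal K:\mathbb R\to[0,\infty)$ be a kernel with $\mathfrak m_j:=\int_{\mathbb R}\xi^j\mathcal K(\xi)\,d\xi<\infty$ for all $j\in\mathbb N$; the kernel is assumed normalized: $\mathfrak m_0=1$, $\mathfrak m_1=0$, $\mathfrak m_2=1$. For $u\in\mathbb R$, $\sigma>0$, $\Delta_j(u,\sigma)=\int_{\mathbb R}\xi^j\frac1\sigma\mathcal K\!\left(\frac{\xi-u}{\sigma}\right)d\xi=\sum_{k=0}^j\binom jk\mathfrak m_k\sigma^ku^{j-k}$. *)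

theory Defs
  imports "HOL-Analysis.Analysis"
begin

definition kmoment :: "(real \<Rightarrow> real) \<Rightarrow> nat \<Rightarrow> real" where
  "kmoment K j = (LINT \<xi>|lborel. \<xi> ^ j * K \<xi>)"

definition Delta :: "(real \<Rightarrow> real) \<Rightarrow> nat \<Rightarrow> real \<Rightarrow> real \<Rightarrow> real" where
  "Delta K j u \<sigma> = (\<Sum>k\<le>j. real (j choose k) * kmoment K k * \<sigma> ^ k * u ^ (j - k))"

definition Mmap :: "(real \<Rightarrow> real) \<Rightarrow> real \<times> real \<times> real \<times> real \<times> real \<Rightarrow> real list" where
  "Mmap K W = (case W of (w1, u1, w2, u2, \<sigma>) \<Rightarrow>
     map (\<lambda>j. w1 * Delta K j u1 \<sigma> + w2 * Delta K j u2 \<sigma>) [0..<5])"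

definition Omega :: "(real \<times> real \<times> real \<times> real \<times> real) set" where
  "Omega = {(w1, u1, w2, u2, \<sigma>). w1 > 0 \<and> w2 > 0 \<and> u1 < u2 \<and> \<sigma> > 0}"

end

theory Submission
  imports Defs
begin

(* Write a point of Omega as a total mass m times a two-point law with mean mu, variance v and
   third cumulant c; the fourth cumulant of such a law is c^2/v - 2 v^2. Smoothing by the kernel at
   scale s adds s^2, m_3 s^3 and (m_4 - 3) s^4 to the cumulants of orders 2, 3, 4, so the moments
   M_0, ..., M_4 determine m, mu and the triple (v + s^2, c + m_3 s^3, c^2/v - 2 v^2 + (m_4 - 3) s^4),
   while (v, c) determines the two-point law. Two scales x < y can produce the same triple iff
   (x + y)^2 (4 K - (5 - m_4)(x^2 + y^2)) <= m_3^2 (x^2 + x y + y^2)^2 at the common level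
   K = v + s^2 > y^2: eliminating c rests on the sharp bound
   (v1 - v2)(c1^2 v2 - c2^2 v1) <= v1 v2 (c1 - c2)^2. As (x^2 + x y + y^2)^2 <= 9/8 (x + y)^2 (x^2 + y^2)
   with equality at x = y, this is impossible exactly when m_4 >= 3 + 9/8 m_3^2. *)

lemma Delta_upto_4:
  assumes "kmoment K 0 = 1" "kmoment K 1 = 0" "kmoment K 2 = 1"
  shows "Delta K 0 u s = 1" "Delta K 1 u s = u" "Delta K 2 u s = u^2 + s^2"
    "Delta K 3 u s = u^3 + 3 * u * s^2 + kmoment K 3 * s^3"
    "Delta K 4 u s = u^4 + 6 * u^2 * s^2 + 4 * kmoment K 3 * s^3 * u + kmoment K 4 * s^4"
  using assms by (simp_all add: Delta_def numeral_eq_Suc binomial_eq_0 algebra_simps)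

lemma map_upt_5: "map f [0..<5] = [f 0, f 1, f 2, f 3, f 4]"
  by (simp add: upt_rec numeral_eq_Suc)

definition moments_of_cumulants :: "real \<Rightarrow> real \<times> real \<times> real \<Rightarrow> real list" where
  "moments_of_cumulants \<mu> \<kappa> = (case \<kappa> of (k2, k3, k4) \<Rightarrow>
     [1, \<mu>, \<mu>^2 + k2, \<mu>^3 + 3 * \<mu> * k2 + k3, \<mu>^4 + 6 * \<mu>^2 * k2 + 4 * \<mu> * k3 + k4 + 3 * k2^2])"

lemma scaled_moments_of_cumulants_inject:
  assumes "m \<noteq> 0"
  shows "map ((*) m) (moments_of_cumulants \<mu> \<kappa>) = map ((*) m') (moments_of_cumulants \<mu>' \<kappa>') \<longleftrightarrow>
    m = m' \<and> \<mu> = \<mu>' \<and> \<kappa> = \<kappa>'"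
  using assms by (cases \<kappa>; cases \<kappa>') (auto simp: moments_of_cumulants_def)

(* Atoms mu - (1 - p) d and mu + p d with weights m p and m (1 - p): mass m, mean mu, gap d. *)
definition mixture_point :: "real \<Rightarrow> real \<Rightarrow> real \<Rightarrow> real \<Rightarrow> real \<Rightarrow> real \<times> real \<times> real \<times> real \<times> real" where
  "mixture_point m p \<mu> d s = (m * p, \<mu> - (1 - p) * d, m * (1 - p), \<mu> + p * d, s)"

lemma mixture_point_in_Omega:
  "0 < m \<Longrightarrow> 0 < p \<Longrightarrow> p < 1 \<Longrightarrow> 0 < d \<Longrightarrow> 0 < s \<Longrightarrow> mixture_point m p \<mu> d s \<in> Omega"
  by (simp add: Omega_def mixture_point_def algebra_simps)

lemma Omega_cases_mixture_point:
  assumes "W \<in> Omega"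
  obtains m p \<mu> d s where "0 < m" "0 < p" "p < 1" "0 < d" "0 < s" "W = mixture_point m p \<mu> d s"
proof -
  obtain w1 u1 w2 u2 s where W: "W = (w1, u1, w2, u2, s)"
    and pos: "0 < w1" "0 < w2" "u1 < u2" "0 < s"
    using assms by (auto simp: Omega_def)
  define m where "m = w1 + w2"
  have "0 < m" using pos by (simp add: m_def)
  have "m * (w1 / m) = w1" "m * (1 - w1 / m) = w2"
    "(w1 * u1 + w2 * u2) / m - (1 - w1 / m) * (u2 - u1) = u1"
    "(w1 * u1 + w2 * u2) / m + w1 / m * (u2 - u1) = u2"
    using \<open>0 < m\<close> by (simp_all add: field_simps) (simp_all add: m_def algebra_simps)
  then have "W = mixture_point m (w1 / m) ((w1 * u1 + w2 * u2) / m) (u2 - u1) s"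
    unfolding W mixture_point_def by simp
  moreover have "0 < w1 / m" "w1 / m < 1" "0 < u2 - u1" using pos \<open>0 < m\<close> by (simp_all add: m_def)
  ultimately show thesis using that \<open>0 < m\<close> \<open>0 < s\<close> by blast
qed

(* Cumulants of the centred law with mass p at -(1 - p) d and mass 1 - p at p d. *)
definition two_point_var :: "real \<Rightarrow> real \<Rightarrow> real" where
  "two_point_var p d = p * (1 - p) * d^2"

definition two_point_cum3 :: "real \<Rightarrow> real \<Rightarrow> real" where
  "two_point_cum3 p d = p * (1 - p) * (2 * p - 1) * d^3"

lemma two_point_var_pos: "0 < p \<Longrightarrow> p < 1 \<Longrightarrow> d \<noteq> 0 \<Longrightarrow> 0 < two_point_var p d"
  by (simp add: two_point_var_def)

lemma two_point_cum3_eq: "two_point_cum3 p d = two_point_var p d * (2 * p - 1) * d"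
  unfolding two_point_var_def two_point_cum3_def by algebra

lemma two_point_cum4:
  assumes "two_point_var p d \<noteq> 0"
  shows "(two_point_cum3 p d)^2 / two_point_var p d - 2 * (two_point_var p d)^2
    = p * (1 - p) * (1 - 6 * p * (1 - p)) * d^4"
  using assms unfolding two_point_var_def two_point_cum3_def
  by (simp add: field_simps) algebra

(* Cumulants of orders 2, 3, 4 of a two-point law with variance v and third cumulant c,
   convolved with the kernel at scale s, where a and b are the kernel moments of order 3 and 4. *)
definition smoothed_cumulants :: "real \<Rightarrow> real \<Rightarrow> real \<Rightarrow> real \<Rightarrow> real \<Rightarrow> real \<times> real \<times> real" where
  "smoothed_cumulants a b v c s = (v + s^2, c + a * s^3, c^2 / v - 2 * v^2 + (b - 3) * s^4)"

lemma Mmap_mixture_point: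
  assumes "kmoment K 0 = 1" "kmoment K 1 = 0" "kmoment K 2 = 1" and "two_point_var p d \<noteq> 0"
  shows "Mmap K (mixture_point m p \<mu> d s) = map ((*) m) (moments_of_cumulants \<mu>
    (smoothed_cumulants (kmoment K 3) (kmoment K 4) (two_point_var p d) (two_point_cum3 p d) s))"
  unfolding Mmap_def mixture_point_def smoothed_cumulants_def moments_of_cumulants_def
    two_point_cum4[OF assms(4)] map_upt_5 Delta_upto_4[OF assms(1-3)]
  unfolding two_point_var_def two_point_cum3_def
  by (simp only: prod.case list.map list.inject simp_thms; intro conjI; algebra)

lemma two_point_params_from_cumulants:
  assumes "0 < p" "p < 1" "0 < d"
  defines "v \<equiv> two_point_var p d" and "c \<equiv> two_point_cum3 p d"
  shows "d = sqrt ((c / v)^2 + 4 * v)" and "p = (1 + c / v / d) / 2"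
proof -
  have "0 < v" using assms by (simp add: v_def two_point_var_pos)
  then have skew: "c / v = (2 * p - 1) * d"
    by (simp add: c_def v_def two_point_cum3_eq)
  have "(c / v)^2 + 4 * v = d^2"
    unfolding skew by (simp add: v_def two_point_var_def algebra_simps power2_eq_square)
  then show "d = sqrt ((c / v)^2 + 4 * v)" using \<open>0 < d\<close> by simp
  show "p = (1 + c / v / d) / 2"
    using \<open>0 < d\<close> by (simp add: skew)
qed

lemma two_point_params_unique:
  assumes "0 < p" "p < 1" "0 < d" "0 < p'" "p' < 1" "0 < d'"
    and "two_point_var p d = two_point_var p' d'" "two_point_cum3 p d = two_point_cum3 p' d'"
  shows "p = p' \<and> d = d'"
  using two_point_params_from_cumulants[OF assms(1-3)] two_point_params_from_cumulants[OF assms(4-6)]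
    assms(7,8) by metis

lemma two_point_params_exist:
  assumes "0 < v"
  shows "\<exists>p d. 0 < p \<and> p < 1 \<and> 0 < d \<and> two_point_var p d = v \<and> two_point_cum3 p d = c"
proof -
  define d where "d = sqrt ((c / v)^2 + 4 * v)"
  define r where "r = c / v / d"
  define p where "p = (1 + r) / 2"
  have d2: "d^2 = (c / v)^2 + 4 * v" unfolding d_def using \<open>0 < v\<close> by simp
  have "0 < d" unfolding d_def using \<open>0 < v\<close> by (simp add: add_nonneg_pos)
  then have rd: "r * d = c / v" by (simp add: r_def)
  have "(r * d)^2 < d^2"
    using d2 \<open>0 < v\<close> by (simp add: rd)
  then have "r^2 * d^2 < 1 * d^2" by (simp add: power_mult_distrib)
  then have "r^2 < 1" using \<open>0 < d\<close> by (simp add: mult_less_cancel_right)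
  then have "0 < p" "p < 1" by (auto simp: p_def abs_square_less_1 abs_less_iff)
  moreover have var: "two_point_var p d = v"
  proof -
    have "two_point_var p d = (d^2 - (r * d)^2) / 4"
      by (simp add: two_point_var_def p_def field_simps power2_eq_square)
    then show ?thesis by (simp add: rd d2)
  qed
  moreover have "two_point_cum3 p d = c"
  proof -
    have "2 * p - 1 = r" by (simp add: p_def field_simps)
    then show ?thesis using \<open>0 < v\<close> by (simp add: two_point_cum3_eq var mult.assoc rd)
  qed
  ultimately show ?thesis using \<open>0 < d\<close> by blast
qed

lemma cross_term_le:
  fixes v1 v2 c1 c2 :: real
  shows "(v1 - v2) * (c1^2 * v2 - c2^2 * v1) \<le> v1 * v2 * (c1 - c2)^2"
proof -
  have "v1 * v2 * (c1 - c2)^2 - (v1 - v2) * (c1^2 * v2 - c2^2 * v1) = (c1 * v2 - c2 * v1)^2"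
    by algebra
  then show ?thesis by (smt (verit) zero_le_power2)
qed

(* c1 is a root of (v1 - v2) c^2 - 2 D v1 c + D^2 v1 + E, whose discriminant is the slack
   in cross_term_le. *)
lemma cross_term_attains:
  fixes v1 v2 D E :: real
  assumes "v2 < v1" and "(v1 - v2) * E \<le> v1 * v2 * D^2"
  shows "\<exists>c1 c2. c1 - c2 = D \<and> c1^2 * v2 - c2^2 * v1 = E"
proof -
  define t where "t = sqrt (v1 * v2 * D^2 - (v1 - v2) * E)"
  define c1 where "c1 = (D * v1 + t) / (v1 - v2)"
  have t2: "t^2 = v1 * v2 * D^2 - (v1 - v2) * E" using assms(2) by (simp add: t_def)
  have "(v1 - v2) * c1 = D * v1 + t" using assms(1) by (simp add: c1_def)
  then have "(v1 - v2) * (c1^2 * v2 - (c1 - D)^2 * v1 - E) = 0"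
    using t2 by algebra
  then have "c1^2 * v2 - (c1 - D)^2 * v1 = E" using assms(1) by simp
  then show ?thesis by (intro exI[of _ c1] exI[of _ "c1 - D"]) simp
qed

lemma smoothed_cumulants_collision_iff:
  fixes a b x y v1 v2 :: real
  assumes "0 < x" "x < y" "0 < v1" "0 < v2" and level: "v1 + x^2 = v2 + y^2"
  shows "(\<exists>c1 c2. smoothed_cumulants a b v1 c1 x = smoothed_cumulants a b v2 c2 y) \<longleftrightarrow>
    (x + y)^2 * (4 * (v1 + x^2) - (5 - b) * (x^2 + y^2)) \<le> a^2 * (x^2 + x * y + y^2)^2"
    (is "?collision \<longleftrightarrow> ?P \<le> ?Q")
proof -
  define D where "D = a * (y^3 - x^3)"
  define G where "G = (2 * v1^2 - (b - 3) * x^4) - (2 * v2^2 - (b - 3) * y^4)"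
  have "v2 < v1" using level assms(1,2) power_strict_mono[of x y 2] by simp
  have "smoothed_cumulants a b v1 c1 x = smoothed_cumulants a b v2 c2 y \<longleftrightarrow>
      c1 - c2 = D \<and> c1^2 * v2 - c2^2 * v1 = v1 * v2 * G" for c1 c2
  proof -
    have "c1^2 / v1 - 2 * v1^2 + (b - 3) * x^4 = c2^2 / v2 - 2 * v2^2 + (b - 3) * y^4 \<longleftrightarrow>
        c1^2 * v2 - c2^2 * v1 = v1 * v2 * G"
      using assms(3,4) by (simp add: G_def field_simps)
    then show ?thesis
      using level by (auto simp: smoothed_cumulants_def D_def algebra_simps)
  qed
  then have "?collision \<longleftrightarrow> (\<exists>c1 c2. c1 - c2 = D \<and> c1^2 * v2 - c2^2 * v1 = v1 * v2 * G)"
    by simp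
  also have "\<dots> \<longleftrightarrow> (v1 - v2) * (v1 * v2 * G) \<le> v1 * v2 * D^2"
    using cross_term_le cross_term_attains[OF \<open>v2 < v1\<close>] by metis
  also have "\<dots> \<longleftrightarrow> (v1 - v2) * G \<le> D^2"
    using assms(3,4) by (simp add: mult.left_commute[of "v1 - v2"])
  also have "\<dots> \<longleftrightarrow> (y - x)^2 * ?P \<le> (y - x)^2 * ?Q"
  proof -
    have "v2 = v1 + x^2 - y^2" using level by simp
    then have "(v1 - v2) * G = (y - x)^2 * ?P" unfolding G_def by algebra
    moreover have "D^2 = (y - x)^2 * ?Q" unfolding D_def by algebra
    ultimately show ?thesis by simp
  qed
  also have "\<dots> \<longleftrightarrow> ?P \<le> ?Q"
    using assms(2) by simp
  finally show ?thesis .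
qed

lemma square_sum_bound:
  fixes x y :: real
  assumes "0 \<le> x" "0 \<le> y"
  shows "(x^2 + x * y + y^2)^2 \<le> 9 / 8 * (x + y)^2 * (x^2 + y^2)"
proof -
  have "9 / 8 * (x + y)^2 * (x^2 + y^2) - (x^2 + x * y + y^2)^2 = (x - y)^2 * (x^2 + 4 * x * y + y^2) / 8"
    by (simp add: field_simps) algebra
  also have "\<dots> \<ge> 0" using assms by simp
  finally show ?thesis by simp
qed

lemma collision_polynomial_pos:
  fixes a b x y K :: real
  assumes "3 + 9 / 8 * a^2 \<le> b" "0 < x" "x < y" "y^2 < K"
  shows "a^2 * (x^2 + x * y + y^2)^2 < (x + y)^2 * (4 * K - (5 - b) * (x^2 + y^2))"
proof -
  have "x^2 < y^2" using assms(2,3) by (simp add: power_strict_mono)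
  have "a^2 * (x^2 + x * y + y^2)^2 \<le> a^2 * (9 / 8 * (x + y)^2 * (x^2 + y^2))"
    using assms(2,3) by (intro mult_left_mono square_sum_bound) simp_all
  also have "\<dots> = (x + y)^2 * (9 / 8 * a^2 * (x^2 + y^2))" by simp
  also have "\<dots> \<le> (x + y)^2 * ((b - 3) * (x^2 + y^2))"
    using assms(1) by (intro mult_left_mono mult_right_mono) simp_all
  also have "\<dots> < (x + y)^2 * (4 * K - (5 - b) * (x^2 + y^2))"
    using assms(2,3) \<open>x^2 < y^2\<close> \<open>y^2 < K\<close> by (intro mult_strict_left_mono) (simp_all add: algebra_simps)
  finally show ?thesis .
qed

lemma collision_polynomial_neg:
  fixes a b :: real
  assumes "b < 3 + 9 / 8 * a^2"
  shows "\<exists>x y. 0 < x \<and> x < y \<and> y < 1 \<and>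
    (x + y)^2 * (4 - (5 - b) * (x^2 + y^2)) < a^2 * (x^2 + x * y + y^2)^2"
proof -
  \<comment> \<open>At x = y = 1 the gap is 8 (b - 3 - 9/8 a^2) < 0; it stays negative at (1 - 2 e, 1 - e) for small e.\<close>
  define gap where "gap x y = (x + y)^2 * (4 - (5 - b) * (x^2 + y^2)) - a^2 * (x^2 + x * y + y^2)^2"
    for x y :: real
  have "((\<lambda>e. gap (1 - 2 * e) (1 - e)) \<longlongrightarrow> gap 1 1) (at_right 0)"
    unfolding gap_def by (intro tendsto_eq_intros) auto
  moreover have "gap 1 1 < 0" using assms by (simp add: gap_def)
  ultimately have "\<forall>\<^sub>F e in at_right 0. gap (1 - 2 * e) (1 - e) < 0"
    by (rule order_tendstoD(2))
  moreover have "\<forall>\<^sub>F e in at_right (0::real). e < 1 / 4"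
    by (rule order_tendstoD(2)[OF tendsto_ident_at]) simp
  ultimately have "\<forall>\<^sub>F e in at_right 0. 0 < e \<and> e < 1 / 4 \<and> gap (1 - 2 * e) (1 - e) < 0"
    using eventually_at_right_less by eventually_elim simp
  then obtain e :: real where "0 < e" "e < 1 / 4" "gap (1 - 2 * e) (1 - e) < 0"
    using eventually_happens' trivial_limit_at_right_real by blast
  then show ?thesis
    by (intro exI[of _ "1 - 2 * e"] exI[of _ "1 - e"]) (simp add: gap_def)
qed

lemma smoothed_cumulants_inj:
  fixes a b v v' c c' s s' :: real
  assumes "3 + 9 / 8 * a^2 \<le> b" "0 < v" "0 < v'" "0 < s" "0 < s'"
    and "smoothed_cumulants a b v c s = smoothed_cumulants a b v' c' s'"
  shows "v = v' \<and> c = c' \<and> s = s'"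
proof -
  have no_collision: False
    if "0 < x" "x < y" "0 < v1" "0 < v2"
      and collision: "smoothed_cumulants a b v1 c1 x = smoothed_cumulants a b v2 c2 y"
    for x y v1 v2 c1 c2
  proof -
    have level: "v1 + x^2 = v2 + y^2" using collision by (simp add: smoothed_cumulants_def)
    then have "y^2 < v1 + x^2" using \<open>0 < v2\<close> by simp
    with collision show False
      using smoothed_cumulants_collision_iff[OF that(1-4) level]
        collision_polynomial_pos[OF assms(1) that(1,2)] by force
  qed
  have "s = s'"
    using no_collision[OF _ _ assms(2,3,6)] no_collision[OF _ _ assms(3,2) assms(6)[symmetric]] assms(4,5)
    by (metis linorder_neqE_linordered_idom)
  then show ?thesis using assms(6) by (simp add: smoothed_cumulants_def)
qed

lemma inj_on_Mmap:
  assumes "kmoment K 0 = 1" "kmoment K 1 = 0" "kmoment K 2 = 1"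
    and "3 + 9 / 8 * (kmoment K 3)^2 \<le> kmoment K 4"
  shows "inj_on (Mmap K) Omega"
proof (rule inj_onI)
  fix W W' assume "W \<in> Omega" "W' \<in> Omega" and "Mmap K W = Mmap K W'"
  obtain m p \<mu> d s where params: "0 < m" "0 < p" "p < 1" "0 < d" "0 < s"
    and W: "W = mixture_point m p \<mu> d s"
    using \<open>W \<in> Omega\<close> by (rule Omega_cases_mixture_point)
  obtain m' p' \<mu>' d' s' where params': "0 < m'" "0 < p'" "p' < 1" "0 < d'" "0 < s'"
    and W': "W' = mixture_point m' p' \<mu>' d' s'"
    using \<open>W' \<in> Omega\<close> by (rule Omega_cases_mixture_point)
  have var_pos: "0 < two_point_var p d" "0 < two_point_var p' d'"
    using params params' by (simp_all add: two_point_var_pos)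
  have "map ((*) m) (moments_of_cumulants \<mu>
          (smoothed_cumulants (kmoment K 3) (kmoment K 4) (two_point_var p d) (two_point_cum3 p d) s)) =
        map ((*) m') (moments_of_cumulants \<mu>'
          (smoothed_cumulants (kmoment K 3) (kmoment K 4) (two_point_var p' d') (two_point_cum3 p' d') s'))"
    using \<open>Mmap K W = Mmap K W'\<close> var_pos
    by (simp add: W W' Mmap_mixture_point[OF assms(1-3)])
  then have "m = m'" "\<mu> = \<mu>'" and
    "smoothed_cumulants (kmoment K 3) (kmoment K 4) (two_point_var p d) (two_point_cum3 p d) s =
     smoothed_cumulants (kmoment K 3) (kmoment K 4) (two_point_var p' d') (two_point_cum3 p' d') s'"
    using \<open>0 < m\<close> by (simp_all add: scaled_moments_of_cumulants_inject)
  then have "two_point_var p d = two_point_var p' d'" "two_point_cum3 p d = two_point_cum3 p' d'"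
    and "s = s'"
    using smoothed_cumulants_inj[OF assms(4) var_pos params(5) params'(5)] by simp_all
  moreover have "p = p'" "d = d'"
    using two_point_params_unique[OF params(2-4) params'(2-4)] calculation(1,2) by simp_all
  ultimately show "W = W'" using \<open>m = m'\<close> \<open>\<mu> = \<mu>'\<close> by (simp add: W W')
qed

lemma moment_condition_if_inj_on_Mmap:
  assumes "kmoment K 0 = 1" "kmoment K 1 = 0" "kmoment K 2 = 1"
    and "inj_on (Mmap K) Omega"
  shows "3 + 9 / 8 * (kmoment K 3)^2 \<le> kmoment K 4"
proof (rule ccontr)
  define a b where "a = kmoment K 3" and "b = kmoment K 4"
  assume "\<not> 3 + 9 / 8 * (kmoment K 3)^2 \<le> kmoment K 4"
  then obtain x y where xy: "0 < x" "x < y" "y < 1"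
    and "(x + y)^2 * (4 - (5 - b) * (x^2 + y^2)) < a^2 * (x^2 + x * y + y^2)^2"
    using collision_polynomial_neg[of b a] by (auto simp: a_def b_def)
  moreover have "y^2 < 1" "x^2 < 1" using xy by (simp_all add: power_less_one_iff abs_less_iff)
  ultimately obtain c1 c2 where
    collision: "smoothed_cumulants a b (1 - x^2) c1 x = smoothed_cumulants a b (1 - y^2) c2 y"
    using smoothed_cumulants_collision_iff[of x y "1 - x^2" "1 - y^2" a b] by fastforce
  obtain p1 d1 where p1: "0 < p1" "p1 < 1" "0 < d1"
    and "two_point_var p1 d1 = 1 - x^2" "two_point_cum3 p1 d1 = c1"
    using two_point_params_exist \<open>x^2 < 1\<close> by (meson diff_gt_0_iff_gt)
  moreover obtain p2 d2 where p2: "0 < p2" "p2 < 1" "0 < d2"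
    and "two_point_var p2 d2 = 1 - y^2" "two_point_cum3 p2 d2 = c2"
    using two_point_params_exist \<open>y^2 < 1\<close> by (meson diff_gt_0_iff_gt)
  ultimately have "Mmap K (mixture_point 1 p1 0 d1 x) = Mmap K (mixture_point 1 p2 0 d2 y)"
    using collision \<open>x^2 < 1\<close> \<open>y^2 < 1\<close>
    by (simp add: Mmap_mixture_point[OF assms(1-3)] a_def b_def)
  moreover have "mixture_point 1 p1 0 d1 x \<in> Omega" "mixture_point 1 p2 0 d2 y \<in> Omega"
    using p1 p2 xy by (simp_all add: mixture_point_in_Omega)
  ultimately have "mixture_point 1 p1 0 d1 x = mixture_point 1 p2 0 d2 y"
    using assms(4) by (simp add: inj_on_def)
  then show False using \<open>x < y\<close> by (simp add: mixture_point_def)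
qed

theorem corollary2p6:
  fixes K :: "real \<Rightarrow> real"
  assumes "\<And>\<xi>. K \<xi> \<ge> 0"
    and "\<And>j. integrable lborel (\<lambda>\<xi>. \<xi> ^ j * K \<xi>)"
    and "kmoment K 0 = 1" and "kmoment K 1 = 0" and "kmoment K 2 = 1"
  shows "inj_on (Mmap K) Omega \<longleftrightarrow> kmoment K 4 \<ge> 3 + 9 / 8 * (kmoment K 3)\<^sup>2"
  using inj_on_Mmap[OF assms(3-5)] moment_condition_if_inj_on_Mmap[OF assms(3-5)] by blast

end
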